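(* Let $M$ be a finite-dimensional simple $YQ(1)$-module on which each central element $Z_{2i}$ ($i\ge0$) acts by a scalar $\chi_{2i}$, and set $\chi(u)=\sum_{i\ge0}\chi_{2i}u^{-2i-1}$. Then $\chi(u)$ is a rational function of the form $\frac{a_0u^{-1}+\dots+a_pu^{-2p-1}}{1+c_1u^{-2}+\dots+c_qu^{-2q}}$ for some $p,q\ge0$ and $a_i,c_j\in\mathbb C$ (equality of formal power series in $u^{-1}$).
   Context: $YQ(1)$ is the associative unital superalgebra over $\mathbb C$ generated by $T_{i,j}^{(m)}$, $m\geq1$, $i,j\in\{1,-1\}$, of parity $p(i)+p(j)$ where $p(1)=0$, $p(-1)=1$. With $T_{i,j}(u)=\delta_{ij}+\sum_{m\ge1}T^{(m)}_{i,j}u^{-m}$, the defining relations are, for all $i,j,k,l$: $(u^2-v^2)[T_{i,j}(u),T_{k,l}(v)](-1)^{p(i)p(k)+p(i)p(l)+p(k)p(l)}=(u+v)(T_{k,j}(u)T_{i,l}(v)-T_{k,j}(v)T_{i,l}(u))-(u-v)(T_{-k,j}(u)T_{-i,l}(v)-T_{k,-j}(v)T_{i,-l}(u))(-1)^{p(k)+p(l)}$, and $T_{i,j}(-u)=T_{-i,-j}(u)$ (supercommutators). Set $\eta_i=(-\tfrac12)^i(\operatorname{ad}T^{(2)}_{1,1})^i(T^{(1)}_{1,-1})$ and $Z_{2i}=\frac12[\eta_0,\eta_{2i}]$; the $Z_{2i}$ are central in $YQ(1)$. *)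

theory Defs
  imports "HOL-Analysis.Analysis" "HOL-Computational_Algebra.Formal_Power_Series"
begin

definition yq_idx :: "int set" where "yq_idx = {1, -1}"

definition ipar :: "int \<Rightarrow> nat" where "ipar i = (if i = -1 then 1 else 0)"

definition msc :: "complex \<Rightarrow> complex^'n^'n \<Rightarrow> complex^'n^'n" where
  "msc c X = (\<chi> a b. c * X $ a $ b)"

definition scomm :: "nat \<Rightarrow> nat \<Rightarrow> complex^'n^'n \<Rightarrow> complex^'n^'n \<Rightarrow> complex^'n^'n" where
  "scomm d e X Y = (if even (d * e) then X ** Y - Y ** X else X ** Y + Y ** X)"

text \<open>Coefficients of the series T_ij(u) = delta_ij + sum_{m>=1} T_ij^(m) u^-m,
  extended by zero to negative indices.\<close>
definition Tc :: "(int \<Rightarrow> int \<Rightarrow> nat \<Rightarrow> complex^'n^'n) \<Rightarrow> int \<Rightarrow> int \<Rightarrow> int \<Rightarrow> complex^'n^'n" where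
  "Tc T i j m = (if m < 0 then 0 else if m = 0 then (if i = j then mat 1 else 0) else T i j (nat m))"

text \<open>A homogeneous operator of parity d on a super vector space with homogeneous basis
  indexed by 'n, the basis vector a having parity par a (True = odd).\<close>
definition homog :: "('n \<Rightarrow> bool) \<Rightarrow> nat \<Rightarrow> complex^'n^'n \<Rightarrow> bool" where
  "homog par d X = (\<forall>a b. X $ a $ b \<noteq> 0 \<longrightarrow> ((par a \<noteq> par b) \<longleftrightarrow> odd d))"

text \<open>Coefficient of u^-r v^-s in the defining relation (all r s :: int).\<close>
definition yq_rel :: "(int \<Rightarrow> int \<Rightarrow> nat \<Rightarrow> complex^'n^'n) \<Rightarrow> int \<Rightarrow> int \<Rightarrow> int \<Rightarrow> int \<Rightarrow> int \<Rightarrow> int \<Rightarrow> bool" where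
  "yq_rel T i j k l r s =
    (let pij = ipar i + ipar j; pkl = ipar k + ipar l;
         sg = (if even (ipar i * ipar k + ipar i * ipar l + ipar k * ipar l) then 1 else -1 :: complex);
         sg2 = (if even (ipar k + ipar l) then 1 else -1 :: complex)
     in msc sg (scomm pij pkl (Tc T i j (r + 2)) (Tc T k l s)
                - scomm pij pkl (Tc T i j r) (Tc T k l (s + 2)))
        = (Tc T k j (r + 1) ** Tc T i l s - Tc T k j s ** Tc T i l (r + 1))
          + (Tc T k j r ** Tc T i l (s + 1) - Tc T k j (s + 1) ** Tc T i l r)
          - msc sg2 ((Tc T (-k) j (r + 1) ** Tc T (-i) l s - Tc T k (-j) s ** Tc T i (-l) (r + 1))
                     - (Tc T (-k) j r ** Tc T (-i) l (s + 1) - Tc T k (-j) (s + 1) ** Tc T i (-l) r)))"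

text \<open>The operators T i j m (m \<ge> 1) define a finite-dimensional YQ(1)-supermodule structure
  on C^'n with homogeneous basis of parities par.\<close>
definition yq1_module :: "('n::finite \<Rightarrow> bool) \<Rightarrow> (int \<Rightarrow> int \<Rightarrow> nat \<Rightarrow> complex^'n^'n) \<Rightarrow> bool" where
  "yq1_module par T =
    ((\<forall>i\<in>yq_idx. \<forall>j\<in>yq_idx. \<forall>m\<ge>1. homog par (ipar i + ipar j) (T i j m))
     \<and> (\<forall>i\<in>yq_idx. \<forall>j\<in>yq_idx. \<forall>k\<in>yq_idx. \<forall>l\<in>yq_idx. \<forall>r s. yq_rel T i j k l r s)
     \<and> (\<forall>i\<in>yq_idx. \<forall>j\<in>yq_idx. \<forall>m\<ge>1. msc ((-1) ^ m) (T i j m) = T (-i) (-j) m))"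

definition csubspace_v :: "(complex^'n) set \<Rightarrow> bool" where
  "csubspace_v W = (0 \<in> W \<and> (\<forall>x\<in>W. \<forall>y\<in>W. x + y \<in> W) \<and> (\<forall>c. \<forall>x\<in>W. (\<chi> a. c * x $ a) \<in> W))"

text \<open>Simple supermodule: no graded submodules other than 0 and the whole space.\<close>
definition yq1_simple :: "('n::finite \<Rightarrow> bool) \<Rightarrow> (int \<Rightarrow> int \<Rightarrow> nat \<Rightarrow> complex^'n^'n) \<Rightarrow> bool" where
  "yq1_simple par T =
    (\<forall>W. csubspace_v W
        \<and> (\<forall>w\<in>W. (\<chi> a. if par a then 0 else w $ a) \<in> W)
        \<and> (\<forall>i\<in>yq_idx. \<forall>j\<in>yq_idx. \<forall>m\<ge>1. \<forall>w\<in>W. T i j m *v w \<in> W)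
        \<longrightarrow> W = {0} \<or> W = UNIV)"

definition yq_eta :: "(int \<Rightarrow> int \<Rightarrow> nat \<Rightarrow> complex^'n^'n) \<Rightarrow> nat \<Rightarrow> complex^'n^'n" where
  "yq_eta T k = msc ((-1/2) ^ k)
     (((\<lambda>Y. scomm 0 1 (T 1 1 2) Y) ^^ k) (T 1 (-1) 1))"

definition yq_Z :: "(int \<Rightarrow> int \<Rightarrow> nat \<Rightarrow> complex^'n^'n) \<Rightarrow> nat \<Rightarrow> complex^'n^'n" where
  "yq_Z T i = msc (1/2) (scomm 1 1 (yq_eta T 0) (yq_eta T (2 * i)))"

end

theory Submission
  imports Defs
begin

(* Write X = T_{1,1}^(2) and Y = T_{1,-1}^(1) = eta_0. Then eta_(2i) = (1/4)^i (ad X)^(2i) Y = E^i Y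
   with E = (1/4) (ad X)^2, and Z_(2i) = L (E^i Y) for the linear map L M = 1/2 [Y, M] (an
   anticommutator, Y being odd). On the finite-dimensional space of operators some iterate E^k Y
   lies in the span of the earlier ones, hence chi_(2i) satisfies a linear recurrence of order k,
   and such a sequence has a rational generating function with denominator of degree k in u^-2. *)

lemma linear_funpow: "linear (E::'a::real_vector \<Rightarrow> 'a) \<Longrightarrow> linear (E ^^ n)"
  by (induction n) (auto intro: linear_compose linear_id simp: id_def[symmetric])

lemma in_span_image_lessThanE:
  fixes f :: "nat \<Rightarrow> 'a::real_vector"
  assumes "x \<in> span (f ` {..<k})"
  obtains \<beta> where "x = (\<Sum>j<k. \<beta> j *\<^sub>R f j)"
  using assms
proof (induction k arbitrary: x thesis)
  case 0
  then show ?case by simp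
next
  case (Suc k)
  then obtain c where "x - c *\<^sub>R f k \<in> span (f ` {..<k})"
    by (auto simp: lessThan_Suc span_insert)
  then obtain \<beta> where "x - c *\<^sub>R f k = (\<Sum>j<k. \<beta> j *\<^sub>R f j)"
    using Suc.IH by blast
  then have "x = (\<Sum>j<Suc k. (\<beta>(k := c)) j *\<^sub>R f j)"
    by (simp add: algebra_simps)
  then show ?case by (rule Suc.prems)
qed

lemma sequence_in_span_of_predecessors:
  fixes f :: "nat \<Rightarrow> 'a::euclidean_space"
  obtains k where "f k \<in> span (f ` {..<k})"
proof -
  have "\<exists>k. f k \<in> span (f ` {..<k})"
  proof (rule ccontr)
    assume none: "\<nexists>k. f k \<in> span (f ` {..<k})"
    have "independent (f ` {..<k}) \<and> card (f ` {..<k}) = k" for k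
    proof (induction k)
      case 0
      then show ?case by (simp add: independent_empty)
    next
      case (Suc k)
      have "f k \<notin> span (f ` {..<k})" using none by blast
      moreover from this have "f k \<notin> f ` {..<k}" by (metis span_base)
      ultimately show ?case
        using Suc.IH by (simp add: lessThan_Suc independent_insertI)
    qed
    then have "Suc DIM('a) \<le> DIM('a)"
      by (metis independent_card_le)
    then show False by simp
  qed
  then show ?thesis using that by blast
qed

lemma linear_iterates_recurrence:
  fixes E :: "'a::euclidean_space \<Rightarrow> 'a" and v :: 'a
  assumes "linear E"
  obtains k \<gamma> where "\<And>m. (E ^^ (m + k)) v = (\<Sum>j<k. \<gamma> j *\<^sub>R (E ^^ (m + j)) v)"
proof -
  obtain k where "(E ^^ k) v \<in> span ((\<lambda>j. (E ^^ j) v) ` {..<k})"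
    by (rule sequence_in_span_of_predecessors)
  then obtain \<gamma> where \<gamma>: "(E ^^ k) v = (\<Sum>j<k. \<gamma> j *\<^sub>R (E ^^ j) v)"
    by (rule in_span_image_lessThanE)
  have "(E ^^ (m + k)) v = (\<Sum>j<k. \<gamma> j *\<^sub>R (E ^^ (m + j)) v)" for m
  proof -
    have "(E ^^ (m + k)) v = (E ^^ m) ((E ^^ k) v)" by (simp add: funpow_add)
    also have "\<dots> = (\<Sum>j<k. \<gamma> j *\<^sub>R (E ^^ (m + j)) v)"
      using linear_funpow[OF assms, of m] by (simp add: \<gamma> linear_sum linear_scale funpow_add)
    finally show ?thesis .
  qed
  then show ?thesis by (rule that)
qed

lemma funpow_scaled_square:
  assumes "linear D"
  shows "((\<lambda>x. c *\<^sub>R D (D x)) ^^ i) v = (c ^ i) *\<^sub>R (D ^^ (2 * i)) v"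
  by (induction i) (simp_all add: linear_scale[OF assms])

lemma fps_eq_sum_odd_monomials:
  fixes f :: "'a::comm_ring_1 fps"
  assumes even_zero: "\<And>n. even n \<Longrightarrow> fps_nth f n = 0"
    and high_zero: "\<And>i. p < i \<Longrightarrow> fps_nth f (2 * i + 1) = 0"
  shows "f = (\<Sum>i\<le>p. fps_const (fps_nth f (2 * i + 1)) * fps_X ^ (2 * i + 1))"
proof (rule fps_ext)
  fix n
  have rhs: "fps_nth (\<Sum>i\<le>p. fps_const (fps_nth f (2 * i + 1)) * fps_X ^ (2 * i + 1)) n
      = (\<Sum>i\<le>p. if n = 2 * i + 1 then fps_nth f n else 0)"
    by (auto simp: fps_sum_nth fps_X_power_nth intro!: sum.cong)
  show "fps_nth f n = fps_nth (\<Sum>i\<le>p. fps_const (fps_nth f (2 * i + 1)) * fps_X ^ (2 * i + 1)) n"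
  proof (cases "even n")
    case True
    then show ?thesis unfolding rhs by (auto simp: even_zero intro!: sum.neutral)
  next
    case False
    then obtain i where i: "n = 2 * i + 1" by (metis oddE)
    show ?thesis
    proof (cases "i \<le> p")
      case True
      then show ?thesis unfolding rhs by (simp add: i)
    next
      case False
      then show ?thesis unfolding rhs using high_zero[of i] by (auto simp: i intro!: sum.neutral)
    qed
  qed
qed

lemma odd_generating_function_rational_if_recurrence:
  fixes s :: "nat \<Rightarrow> 'a::field"
  assumes recurrence: "\<And>m. s (m + k) = (\<Sum>j<k. \<gamma> j * s (m + j))"
  shows "\<exists>(p::nat) (q::nat) (a::nat \<Rightarrow> 'a) (c::nat \<Rightarrow> 'a).
           Abs_fps (\<lambda>n. if odd n then s ((n - 1) div 2) else 0)
           = (\<Sum>i\<le>p. fps_const (a i) * fps_X ^ (2 * i + 1))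
             / (1 + (\<Sum>j\<in>{1..q}. fps_const (c j) * fps_X ^ (2 * j)))"
proof -
  define F where "F = Abs_fps (\<lambda>n. if odd n then s ((n - 1) div 2) else 0)"
  (* Q is the reversed characteristic polynomial of the recurrence, evaluated at X^2. *)
  define c where "c j = - \<gamma> (k - j)" for j
  define Q where "Q = 1 + (\<Sum>j\<in>{1..k}. fps_const (c j) * fps_X ^ (2 * j))"
  define a where "a i = fps_nth (Q * F) (2 * i + 1)" for i
  have QF_nth: "fps_nth (Q * F) n
      = fps_nth F n + (\<Sum>j\<in>{1..k}. c j * (if n < 2 * j then 0 else fps_nth F (n - 2 * j)))" for n
  proof -
    have "Q * F = F + (\<Sum>j\<in>{1..k}. fps_const (c j) * (fps_X ^ (2 * j) * F))"
      unfolding Q_def by (simp add: distrib_right sum_distrib_right mult.assoc)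
    then show ?thesis by (simp add: fps_sum_nth fps_X_power_mult_nth)
  qed
  have QF_even: "fps_nth (Q * F) n = 0" if "even n" for n
    unfolding QF_nth using that by (auto simp: F_def intro!: sum.neutral)
  have QF_high: "fps_nth (Q * F) (2 * i + 1) = 0" if "k < i" for i
  proof -
    obtain m where m: "i = m + k" using \<open>k < i\<close> by (metis less_imp_add_positive add.commute)
    have "(\<Sum>j\<in>{1..k}. c j * (if 2 * i + 1 < 2 * j then 0 else fps_nth F (2 * i + 1 - 2 * j)))
        = - (\<Sum>j\<in>{1..k}. \<gamma> (k - j) * s (m + (k - j)))"
      unfolding sum_negf[symmetric]
    proof (rule sum.cong)
      fix j assume "j \<in> {1..k}"
      then have "2 * i + 1 - 2 * j = 2 * (m + (k - j)) + 1" using m by auto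
      then show "c j * (if 2 * i + 1 < 2 * j then 0 else fps_nth F (2 * i + 1 - 2 * j))
          = - (\<gamma> (k - j) * s (m + (k - j)))"
        using \<open>j \<in> {1..k}\<close> by (simp add: c_def F_def m)
    qed simp
    also have "\<dots> = - s (m + k)"
      using sum.atLeastLessThan_rev_at_least_Suc_atMost[of "\<lambda>j. \<gamma> j * s (m + j)" 0 k]
      by (simp add: recurrence lessThan_atLeast0)
    finally show ?thesis unfolding QF_nth by (simp add: F_def m)
  qed
  have "fps_nth Q 0 = 1"
    by (simp add: Q_def fps_sum_nth)
  then have "F = (Q * F) / Q"
    by (metis nonzero_mult_div_cancel_left fps_nonzero_nth zero_neq_one)
  also have "Q * F = (\<Sum>i\<le>k. fps_const (a i) * fps_X ^ (2 * i + 1))"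
    unfolding a_def using QF_even QF_high by (rule fps_eq_sum_odd_monomials)
  finally show ?thesis unfolding F_def Q_def by blast
qed

lemma linear_scomm: "linear (scomm d e A)"
  unfolding scomm_def
  by (cases "even (d * e)"; simp; rule linearI)
     (auto simp: matrix_matrix_mult_def vec_eq_iff sum.distrib sum_subtractf[symmetric]
        algebra_simps scaleR_sum_right)

lemma msc_of_real: "msc (of_real r) M = r *\<^sub>R M"
  by (simp only: msc_def vec_eq_iff vector_scaleR_component vec_lambda_beta)
     (simp add: scaleR_conv_of_real)

lemma yq_eta_eq:
  "yq_eta T k = ((-1/2::real) ^ k) *\<^sub>R (scomm 0 1 (T 1 1 2) ^^ k) (T 1 (-1) 1)"
proof -
  have "(-1/2::complex) ^ k = of_real ((-1/2) ^ k)"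
    by simp
  then show ?thesis
    by (simp only: yq_eta_def msc_of_real)
qed

lemma yq_eta_even:
  "yq_eta T (2 * i)
     = ((\<lambda>M. (1/4::real) *\<^sub>R scomm 0 1 (T 1 1 2) (scomm 0 1 (T 1 1 2) M)) ^^ i) (T 1 (-1) 1)"
proof -
  have "(-1/2::real) ^ (2 * i) = (1/4) ^ i"
    by (simp add: power_mult power2_eq_square)
  then show ?thesis
    by (simp add: yq_eta_eq funpow_scaled_square linear_scomm)
qed

lemma yq_Z_eq: "yq_Z T i = (1/2::real) *\<^sub>R scomm 1 1 (T 1 (-1) 1) (yq_eta T (2 * i))"
proof -
  have "(1/2::complex) = of_real (1/2)" by simp
  then show ?thesis
    by (simp only: yq_Z_def msc_of_real yq_eta_eq[of T 0]) simp
qed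

theorem lemma5p3:
  fixes par :: "'n::finite \<Rightarrow> bool"
    and T :: "int \<Rightarrow> int \<Rightarrow> nat \<Rightarrow> complex^'n^'n"
    and chi :: "nat \<Rightarrow> complex"
  assumes "yq1_module par T"
    and "yq1_simple par T"
    and "\<And>i. yq_Z T i = mat (chi i)"
  shows "\<exists>(p::nat) (q::nat) (a::nat \<Rightarrow> complex) (c::nat \<Rightarrow> complex).
           Abs_fps (\<lambda>n. if odd n then chi ((n - 1) div 2) else 0)
           = (\<Sum>i\<le>p. fps_const (a i) * fps_X ^ (2 * i + 1))
             / (1 + (\<Sum>j\<in>{1..q}. fps_const (c j) * fps_X ^ (2 * j)))"
proof -
  define X where "X = T 1 1 2"
  define Y where "Y = T 1 (-1) 1"
  define E where "E = (\<lambda>M. (1/4::real) *\<^sub>R scomm 0 1 X (scomm 0 1 X M))"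
  define L where "L = (\<lambda>M. (1/2::real) *\<^sub>R scomm 1 1 Y M)"
  have "linear E"
    unfolding E_def
    by (intro real_vector.linear_compose_scale_right
        linear_compose[OF linear_scomm linear_scomm, unfolded o_def])
  have "linear L"
    unfolding L_def by (intro real_vector.linear_compose_scale_right linear_scomm)
  have chi_mat_eq: "mat (chi i) = L ((E ^^ i) Y)" for i
    using assms(3)[of i] by (simp add: yq_Z_eq yq_eta_even L_def E_def X_def Y_def)
  obtain k \<gamma> where recurrence: "\<And>m. (E ^^ (m + k)) Y = (\<Sum>j<k. \<gamma> j *\<^sub>R (E ^^ (m + j)) Y)"
    using linear_iterates_recurrence[OF \<open>linear E\<close>] by blast
  have mat_recurrence:
    "mat (chi (m + k)) = (\<Sum>j<k. \<gamma> j *\<^sub>R mat (chi (m + j)) :: complex^'n^'n)" for m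
    unfolding chi_mat_eq recurrence
    by (simp add: linear_sum[OF \<open>linear L\<close>] linear_scale[OF \<open>linear L\<close>])
  fix a :: 'n
  have "chi (m + k) = (\<Sum>j<k. of_real (\<gamma> j) * chi (m + j))" for m
    using arg_cong[OF mat_recurrence[of m], where f = "\<lambda>M. M $ a $ a"]
    by (simp add: mat_def sum_component) (simp add: scaleR_conv_of_real)
  then show ?thesis
    by (rule odd_generating_function_rational_if_recurrence)
qed
end
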